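(* Let $n\ge3$, $1<\alpha\le\sqrt2$, $\overline\alpha=\sqrt{2-\alpha^2}$. Then the center density of $D_n^\alpha$ is $$\delta(D_n^\alpha)=\frac{1}{2^{n/2}\alpha^{n-3}(\alpha^3+\overline\alpha^3)}.$$
   Context: Let $\mathbf{e}_1,\dots,\mathbf{e}_n$ be the standard basis of $\mathbb{R}^n$. For $n\ge3$, $1\le\alpha\le\sqrt2$ and $\overline\alpha:=\sqrt{2-\alpha^2}$, $D_n^\alpha$ is the lattice with basis $\mathbf{b}_1=\alpha\mathbf{e}_1+\overline\alpha\mathbf{e}_2$, $\mathbf{b}_2=\alpha\mathbf{e}_2+\overline\alpha\mathbf{e}_3$, $\mathbf{b}_3=\overline\alpha\mathbf{e}_1+\alpha\mathbf{e}_3$, $\mathbf{b}_4=\overline\alpha\mathbf{e}_3-\alpha\mathbf{e}_4$, and $\mathbf{b}_k=\overline\alpha\mathbf{e}_{k-1}-\alpha\mathbf{e}_k$ for $5\le k\le n$. Center density: $\delta(\Lambda)=\lambda_1(\Lambda)^n/(2^n\operatorname{vol}(\Lambda))$. *)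

theory Defs
  imports Complex_Main "Jordan_Normal_Form.Determinant"
begin

text \<open>Vectors of R^n are represented as functions nat => real, with components
  indexed by 1..n (components outside 1..n are irrelevant / zero).\<close>

definition std_e :: "nat \<Rightarrow> nat \<Rightarrow> real" where
  "std_e k = (\<lambda>i. if i = k then 1 else 0)"

definition alpha_bar :: "real \<Rightarrow> real" where
  "alpha_bar a = sqrt (2 - a\<^sup>2)"

definition Dbasis :: "real \<Rightarrow> nat \<Rightarrow> nat \<Rightarrow> real" where
  "Dbasis a k = (let ab = alpha_bar a in
     if k = 1 then (\<lambda>i. a * std_e 1 i + ab * std_e 2 i)
     else if k = 2 then (\<lambda>i. a * std_e 2 i + ab * std_e 3 i)
     else if k = 3 then (\<lambda>i. ab * std_e 1 i + a * std_e 3 i)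
     else if k = 4 then (\<lambda>i. ab * std_e 3 i - a * std_e 4 i)
     else (\<lambda>i. ab * std_e (k - 1) i - a * std_e k i))"

definition Dlattice :: "real \<Rightarrow> nat \<Rightarrow> (nat \<Rightarrow> real) set" where
  "Dlattice a n = {v. \<exists>c :: nat \<Rightarrow> int.
      v = (\<lambda>i. \<Sum>k = 1..n. of_int (c k) * Dbasis a k i)}"

definition vnorm :: "nat \<Rightarrow> (nat \<Rightarrow> real) \<Rightarrow> real" where
  "vnorm n v = sqrt (\<Sum>i = 1..n. (v i)\<^sup>2)"

definition lambda1 :: "nat \<Rightarrow> (nat \<Rightarrow> real) set \<Rightarrow> real" where
  "lambda1 n L = Inf {vnorm n v | v. v \<in> L \<and> v \<noteq> (\<lambda>i. 0)}"

text \<open>Volume (covolume) of D_n^alpha: |det| of the basis matrix (column j = b_(j+1)).\<close>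
definition Dvol :: "real \<Rightarrow> nat \<Rightarrow> real" where
  "Dvol a n = \<bar>det (mat n n (\<lambda>(i, j). Dbasis a (j + 1) (i + 1)))\<bar>"

definition Dcenter_density :: "real \<Rightarrow> nat \<Rightarrow> real" where
  "Dcenter_density a n = lambda1 n (Dlattice a n) ^ n / (2 ^ n * Dvol a n)"

end

theory Submission
  imports Defs
begin

text \<open>
  The covolume is a determinant expanded along the last row: each basis vector
  \<open>b\<^sub>k\<close> with \<open>k \<ge> 4\<close> contributes a factor \<open>-\<alpha>\<close>, leaving the \<open>3 \<times> 3\<close> block
  of determinant \<open>\<alpha>\<^sup>3 + \<overline>\<alpha>\<^sup>3\<close>.

  For the minimum, write a lattice vector as \<open>v = \<alpha> x + \<overline>\<alpha> y\<close> with integer vectors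
  \<open>x, y\<close> and put \<open>z = x + y\<close>, so \<open>v = (\<alpha> - \<overline>\<alpha>) x + \<overline>\<alpha> z\<close>. For \<open>v \<noteq> 0\<close> one has
  \<open>|x|\<^sup>2 \<ge> 1\<close>; \<open>2 x\<cdot>z\<close> is a nonzero sum of squares, so \<open>x\<cdot>z \<ge> 1\<close>; and \<open>z\<close> is a
  nonzero integer vector with even coordinate sum, so \<open>|z|\<^sup>2 \<ge> 2\<close>. Since
  \<open>\<alpha> \<ge> \<overline>\<alpha> \<ge> 0\<close> all cross terms are nonnegative and
  \<open>|v|\<^sup>2 \<ge> (\<alpha> - \<overline>\<alpha>)\<^sup>2 + 2 (\<alpha> - \<overline>\<alpha>) \<overline>\<alpha> + 2 \<overline>\<alpha>\<^sup>2 = \<alpha>\<^sup>2 + \<overline>\<alpha>\<^sup>2 = 2 = |b\<^sub>1|\<^sup>2\<close>.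
\<close>

lemma det_mat_2:
  assumes "(A :: 'a :: comm_ring_1 mat) \<in> carrier_mat 2 2"
  shows "det A = A $$ (0,0) * A $$ (1,1) - A $$ (0,1) * A $$ (1,0)"
proof -
  have "det A = (\<Sum>j<2. A $$ (0,j) * cofactor A 0 j)"
    by (rule laplace_expansion_row[OF assms]) auto
  also have "\<dots> = A $$ (0,0) * A $$ (1,1) - A $$ (0,1) * A $$ (1,0)"
    using assms by (simp add: numeral_2_eq_2 cofactor_def det_single mat_delete_def)
  finally show ?thesis .
qed

lemma det_mat_3:
  assumes "(A :: 'a :: comm_ring_1 mat) \<in> carrier_mat 3 3"
  shows "det A = A $$ (0,0) * (A $$ (1,1) * A $$ (2,2) - A $$ (1,2) * A $$ (2,1))
     - A $$ (0,1) * (A $$ (1,0) * A $$ (2,2) - A $$ (1,2) * A $$ (2,0))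
     + A $$ (0,2) * (A $$ (1,0) * A $$ (2,1) - A $$ (1,1) * A $$ (2,0))"
proof -
  have minor: "det (mat (Suc (Suc 0)) (Suc (Suc 0)) f) = f (0,0) * f (1,1) - f (0,1) * f (1,0)"
    for f :: "nat \<times> nat \<Rightarrow> 'a"
    by (subst det_mat_2) (auto simp: numeral_2_eq_2)
  have "det A = (\<Sum>j<3. A $$ (0,j) * cofactor A 0 j)"
    by (rule laplace_expansion_row[OF assms]) auto
  also have "\<dots> = A $$ (0,0) * (A $$ (1,1) * A $$ (2,2) - A $$ (1,2) * A $$ (2,1))
     - A $$ (0,1) * (A $$ (1,0) * A $$ (2,2) - A $$ (1,2) * A $$ (2,0))
     + A $$ (0,2) * (A $$ (1,0) * A $$ (2,1) - A $$ (1,1) * A $$ (2,0))"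
    using assms
    by (simp add: numeral_3_eq_3 numeral_2_eq_2 cofactor_def minor mat_delete_def algebra_simps)
  finally show ?thesis .
qed

definition Dbasis_mat :: "real \<Rightarrow> nat \<Rightarrow> real mat" where
  "Dbasis_mat a n = mat n n (\<lambda>(i, j). Dbasis a (j + 1) (i + 1))"

lemma det_Dbasis_mat_3: "det (Dbasis_mat a 3) = a ^ 3 + alpha_bar a ^ 3"
  by (subst det_mat_3)
    (auto simp: Dbasis_mat_def Dbasis_def std_e_def Let_def power3_eq_cube algebra_simps)

lemma det_Dbasis_mat_Suc:
  assumes "n \<ge> 3"
  shows "det (Dbasis_mat a (Suc n)) = - a * det (Dbasis_mat a n)"
proof -
  let ?M = "Dbasis_mat a (Suc n)"
  have last_row: "?M $$ (n,j) = (if j = n then - a else 0)" if "j < Suc n" for j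
    using assms that by (auto simp: Dbasis_mat_def Dbasis_def std_e_def Let_def)
  have minor: "mat_delete ?M n n = Dbasis_mat a n"
    by (rule eq_matI) (auto simp: Dbasis_mat_def mat_delete_def)
  have "det ?M = (\<Sum>j<Suc n. ?M $$ (n,j) * cofactor ?M n j)"
    by (rule laplace_expansion_row) (auto simp: Dbasis_mat_def)
  also have "\<dots> = - a * cofactor ?M n n"
    by (simp add: last_row)
  also have "cofactor ?M n n = det (Dbasis_mat a n)"
    by (simp add: cofactor_def minor)
  finally show ?thesis .
qed

lemma det_Dbasis_mat:
  assumes "n \<ge> 3"
  shows "det (Dbasis_mat a n) = (- a) ^ (n - 3) * (a ^ 3 + alpha_bar a ^ 3)"
  using assms
proof (induction n rule: dec_induct)
  case base
  show ?case by (simp add: det_Dbasis_mat_3)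
next
  case (step m)
  then have "Suc m - 3 = Suc (m - 3)" by simp
  with step show ?case by (simp add: det_Dbasis_mat_Suc)
qed

lemma alpha_bar_facts:
  assumes "1 < a" "a \<le> sqrt 2"
  shows "alpha_bar a \<ge> 0" "alpha_bar a ^ 2 = 2 - a ^ 2" "alpha_bar a \<le> a"
proof -
  have "a ^ 2 \<le> sqrt 2 ^ 2" using assms by (intro power_mono) auto
  then have a2: "a ^ 2 \<le> 2" by simp
  show "alpha_bar a \<ge> 0" "alpha_bar a ^ 2 = 2 - a ^ 2"
    using a2 by (simp_all add: alpha_bar_def)
  have "1 \<le> a ^ 2" using assms by (simp add: one_le_power)
  then have "sqrt (2 - a ^ 2) \<le> sqrt (a ^ 2)" by (intro real_sqrt_le_mono) simp
  then show "alpha_bar a \<le> a" using assms by (simp add: alpha_bar_def)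
qed

lemma Dvol_eq:
  assumes "n \<ge> 3" "1 < a" "a \<le> sqrt 2"
  shows "Dvol a n = a ^ (n - 3) * (a ^ 3 + alpha_bar a ^ 3)"
proof -
  have "a ^ 3 + alpha_bar a ^ 3 > 0"
    using assms(2) alpha_bar_facts(1)[OF assms(2,3)] by (simp add: add_pos_nonneg)
  moreover have "Dvol a n = \<bar>det (Dbasis_mat a n)\<bar>"
    by (simp add: Dvol_def Dbasis_mat_def)
  ultimately show ?thesis
    using assms(2) by (simp add: det_Dbasis_mat[OF assms(1)] abs_mult power_abs)
qed

lemma sum_squares_ge_2_if_even_sum:
  fixes z :: "'i \<Rightarrow> int"
  assumes "finite A" "i \<in> A" "z i \<noteq> 0" "even (\<Sum>j\<in>A. z j)"
  shows "(\<Sum>j\<in>A. z j ^ 2) \<ge> 2"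
proof -
  have "1 \<le> z i ^ 2"
    using assms(3) by (simp add: int_one_le_iff_zero_less)
  also have "z i ^ 2 \<le> (\<Sum>j\<in>A. z j ^ 2)"
    by (rule member_le_sum) (use assms in auto)
  finally have ge1: "1 \<le> (\<Sum>j\<in>A. z j ^ 2)" .
  have "even (z j ^ 2 - z j)" for j
    by (simp add: power2_eq_square flip: right_diff_distrib')
  then have "even (\<Sum>j\<in>A. z j ^ 2 - z j)" by (intro dvd_sum)
  with assms(4) have "even (\<Sum>j\<in>A. z j ^ 2)" by (simp add: sum_subtractf)
  with ge1 show ?thesis by presburger
qed

lemma sum_squares_comb_lower_bound:
  fixes X Z :: "'i \<Rightarrow> real"
  assumes "0 \<le> b" "b \<le> a"
    and "1 \<le> (\<Sum>i\<in>A. X i ^ 2)" "1 \<le> (\<Sum>i\<in>A. X i * Z i)" "2 \<le> (\<Sum>i\<in>A. Z i ^ 2)"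
  shows "a ^ 2 + b ^ 2 \<le> (\<Sum>i\<in>A. ((a - b) * X i + b * Z i) ^ 2)"
proof -
  have "a ^ 2 + b ^ 2 = (a - b) ^ 2 * 1 + 2 * (a - b) * b * 1 + b ^ 2 * 2"
    by (simp add: power2_eq_square algebra_simps)
  also have "\<dots> \<le> (a - b) ^ 2 * (\<Sum>i\<in>A. X i ^ 2) + 2 * (a - b) * b * (\<Sum>i\<in>A. X i * Z i)
      + b ^ 2 * (\<Sum>i\<in>A. Z i ^ 2)"
    using assms by (intro add_mono mult_left_mono) auto
  also have "\<dots> = (\<Sum>i\<in>A. ((a - b) * X i + b * Z i) ^ 2)"
  proof -
    have "((a - b) * X i + b * Z i) ^ 2
        = (a - b) ^ 2 * X i ^ 2 + 2 * (a - b) * b * (X i * Z i) + b ^ 2 * Z i ^ 2" for i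
      by (simp add: power2_eq_square algebra_simps)
    then show ?thesis by (simp add: sum.distrib sum_distrib_left)
  qed
  finally show ?thesis .
qed

text \<open>
  The coordinates of \<open>\<Sum>\<^sub>k c\<^sub>k b\<^sub>k\<close> are \<open>\<alpha> x\<^sub>i + \<overline>\<alpha> y\<^sub>i\<close> with \<open>x = Dcoeff_a c\<close> and
  \<open>y = Dcoeff_abar c\<close>; \<open>abar_index i\<close> is the \<open>k \<noteq> 4\<close> for which \<open>b\<^sub>k\<close> has an
  \<open>\<overline>\<alpha>\<close>-entry in coordinate \<open>i\<close>. The formulas read \<open>c\<close> at index \<open>n + 1\<close>, so coefficient
  vectors are extended by \<open>c (n + 1) = 0\<close>.
\<close>

definition Dcoeff_a :: "(nat \<Rightarrow> int) \<Rightarrow> nat \<Rightarrow> int" where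
  "Dcoeff_a c i = (if i \<le> 3 then c i else - c i)"

definition abar_index :: "nat \<Rightarrow> nat" where
  "abar_index i = (if i = 1 then 3 else if i = 2 then 1 else if i = 3 then 2 else i + 1)"

definition Dcoeff_abar :: "(nat \<Rightarrow> int) \<Rightarrow> nat \<Rightarrow> int" where
  "Dcoeff_abar c i = c (abar_index i) + (if i = 3 then c 4 else 0)"

lemma Dbasis_coeff:
  assumes "1 \<le> k" "1 \<le> i"
  shows "of_int (c k) * Dbasis a k i =
    (if k = i then a * of_int (Dcoeff_a c i) else 0)
  + (if k = abar_index i then alpha_bar a * of_int (c k) else 0)
  + (if k = 4 then if i = 3 then alpha_bar a * of_int (c 4) else 0 else 0)"
  using assms by (auto simp: Dbasis_def std_e_def Let_def abar_index_def Dcoeff_a_def)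

lemma Dlattice_coord:
  assumes "n \<ge> 3" "c (Suc n) = 0" "i \<in> {1..n}"
  shows "(\<Sum>k=1..n. of_int (c k) * Dbasis a k i)
    = a * of_int (Dcoeff_a c i) + alpha_bar a * of_int (Dcoeff_abar c i)"
proof -
  have "(\<Sum>k=1..n. of_int (c k) * Dbasis a k i) = (\<Sum>k=1..n.
      (if k = i then a * of_int (Dcoeff_a c i) else 0)
    + (if k = abar_index i then alpha_bar a * of_int (c k) else 0)
    + (if k = 4 then if i = 3 then alpha_bar a * of_int (c 4) else 0 else 0))"
    using assms(3) by (intro sum.cong refl Dbasis_coeff) auto
  also have "\<dots> = a * of_int (Dcoeff_a c i)
    + (if abar_index i \<in> {1..n} then alpha_bar a * of_int (c (abar_index i)) else 0)
    + (if 4 \<in> {1..n} then if i = 3 then alpha_bar a * of_int (c 4) else 0 else 0)"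
    using assms(3) by (simp add: sum.distrib)
  also have "\<dots> = a * of_int (Dcoeff_a c i) + alpha_bar a * of_int (Dcoeff_abar c i)"
    using assms by (cases "i = n"; cases "n = 3")
      (auto simp: Dcoeff_abar_def abar_index_def algebra_simps)
  finally show ?thesis .
qed

lemma two_Dcoeff_inner:
  assumes "n \<ge> 3"
  shows "2 * (\<Sum>i=1..n. Dcoeff_a c i * (Dcoeff_a c i + Dcoeff_abar c i)) =
    (c 1 + c 2 + c 3) ^ 2 + c 1 ^ 2 + c 2 ^ 2 + (c 3 + c 4) ^ 2
    + (\<Sum>k=4..n. (c k - c (Suc k)) ^ 2) - c (Suc n) ^ 2"
  using assms
proof (induction n rule: dec_induct)
  case base
  have "{1..3::nat} = {1,2,3}" by auto
  then show ?case
    by (simp add: Dcoeff_a_def Dcoeff_abar_def abar_index_def power2_eq_square algebra_simps)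
next
  case (step m)
  then have "Dcoeff_a c (Suc m) * (Dcoeff_a c (Suc m) + Dcoeff_abar c (Suc m))
      = c (Suc m) ^ 2 - c (Suc m) * c (Suc (Suc m))"
    by (simp add: Dcoeff_a_def Dcoeff_abar_def abar_index_def power2_eq_square algebra_simps)
  with step show ?case
    by (simp add: power2_eq_square algebra_simps)
qed

lemma sum_Dcoeff:
  assumes "n \<ge> 3"
  shows "(\<Sum>i=1..n. Dcoeff_a c i + Dcoeff_abar c i) = 2 * (c 1 + c 2 + c 3) + c (Suc n)"
  using assms
proof (induction n rule: dec_induct)
  case base
  have "{1..3::nat} = {1,2,3}" by auto
  then show ?case by (simp add: Dcoeff_a_def Dcoeff_abar_def abar_index_def)
next
  case (step m)
  then show ?case by (simp add: Dcoeff_a_def Dcoeff_abar_def abar_index_def)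
qed

lemma Dcoeff_inner_ge_1:
  assumes "n \<ge> 3" "c (Suc n) = 0" "k0 \<in> {1..n}" "c k0 \<noteq> 0"
  shows "(\<Sum>i=1..n. Dcoeff_a c i * (Dcoeff_a c i + Dcoeff_abar c i)) \<ge> 1"
proof (rule ccontr)
  assume "\<not> ?thesis"
  then have "(c 1 + c 2 + c 3) ^ 2 + c 1 ^ 2 + c 2 ^ 2 + (c 3 + c 4) ^ 2
      + (\<Sum>k=4..n. (c k - c (Suc k)) ^ 2) \<le> 0"
    using two_Dcoeff_inner[OF assms(1), of c] assms(2) by simp
  moreover have "(\<Sum>k=4..n. (c k - c (Suc k)) ^ 2) \<ge> 0"
    by (intro sum_nonneg) auto
  ultimately have "c 1 = 0" "c 2 = 0" "c 3 = 0" "c 4 = 0"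
    and telescope: "(\<Sum>k=4..n. (c k - c (Suc k)) ^ 2) = 0"
    by (smt (verit) zero_le_power2 power_zero_numeral zero_eq_power2)+
  have "c k = 0" if "4 \<le> k" "k \<le> Suc n" for k
    using that(2)
  proof (induction k rule: inc_induct)
    case base
    show ?case by (fact assms(2))
  next
    case (step k)
    with that(1) have "(c k - c (Suc k)) ^ 2 = 0"
      using telescope by (subst (asm) sum_nonneg_eq_0_iff) auto
    with step show ?case by simp
  qed
  moreover have "k0 \<in> {1, 2, 3} \<or> 4 \<le> k0"
    using assms(3) by auto
  ultimately have "c k0 = 0"
    using \<open>c 1 = 0\<close> \<open>c 2 = 0\<close> \<open>c 3 = 0\<close> assms(3) by auto
  with assms(4) show False by simp
qed

lemma Dcoeff_a_sum_squares_ge_1: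
  fixes c :: "nat \<Rightarrow> int"
  assumes "k0 \<in> {1..n}" "c k0 \<noteq> 0"
  shows "(\<Sum>i=1..n. Dcoeff_a c i ^ 2) \<ge> 1"
proof -
  have "1 \<le> Dcoeff_a c k0 ^ 2"
    using assms(2) by (simp add: Dcoeff_a_def int_one_le_iff_zero_less)
  also have "\<dots> \<le> (\<Sum>i=1..n. Dcoeff_a c i ^ 2)"
    by (rule member_le_sum) (use assms in auto)
  finally show ?thesis .
qed

lemma Dcoeff_sum_squares_ge_2:
  assumes "n \<ge> 3" "c (Suc n) = 0" "k0 \<in> {1..n}" "c k0 \<noteq> 0"
  shows "(\<Sum>i=1..n. (Dcoeff_a c i + Dcoeff_abar c i) ^ 2) \<ge> 2"
proof -
  have "\<exists>i\<in>{1..n}. Dcoeff_a c i + Dcoeff_abar c i \<noteq> 0"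
  proof (rule ccontr)
    assume "\<not> ?thesis"
    then have "(\<Sum>i=1..n. Dcoeff_a c i * (Dcoeff_a c i + Dcoeff_abar c i)) = 0"
      by simp
    with Dcoeff_inner_ge_1[OF assms] show False by simp
  qed
  moreover have "even (\<Sum>i=1..n. Dcoeff_a c i + Dcoeff_abar c i)"
    using sum_Dcoeff[OF assms(1), of c] assms(2) by simp
  ultimately show ?thesis
    by (auto intro: sum_squares_ge_2_if_even_sum)
qed

lemma Dlattice_obtain_coeffs:
  assumes "v \<in> Dlattice a n"
  obtains c where "c (Suc n) = 0" "v = (\<lambda>i. \<Sum>k=1..n. of_int (c k) * Dbasis a k i)"
proof -
  from assms obtain c where v: "v = (\<lambda>i. \<Sum>k=1..n. of_int (c k) * Dbasis a k i)"
    by (auto simp: Dlattice_def)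
  let ?c = "c(Suc n := 0)"
  have "v = (\<lambda>i. \<Sum>k=1..n. of_int (?c k) * Dbasis a k i)"
    unfolding v by (intro ext sum.cong) auto
  then show ?thesis by (rule that[of ?c, rotated]) simp
qed

lemma Dlattice_vnorm_ge:
  assumes "n \<ge> 3" "1 < a" "a \<le> sqrt 2" "v \<in> Dlattice a n" "v \<noteq> (\<lambda>i. 0)"
  shows "sqrt 2 \<le> vnorm n v"
proof -
  obtain c where c: "c (Suc n) = 0" and v: "v = (\<lambda>i. \<Sum>k=1..n. of_int (c k) * Dbasis a k i)"
    using Dlattice_obtain_coeffs[OF assms(4)] .
  have "\<exists>k\<in>{1..n}. c k \<noteq> 0"
  proof (rule ccontr)
    assume "\<not> ?thesis"
    then have "v = (\<lambda>i. 0)" unfolding v by simp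
    with assms(5) show False ..
  qed
  then obtain k0 where k0: "k0 \<in> {1..n}" "c k0 \<noteq> 0" ..
  define b where "b = alpha_bar a"
  define X where "X i = real_of_int (Dcoeff_a c i)" for i
  define Z where "Z i = real_of_int (Dcoeff_a c i + Dcoeff_abar c i)" for i
  have b: "0 \<le> b" "b \<le> a" "a ^ 2 + b ^ 2 = 2"
    using alpha_bar_facts[OF assms(2,3)] by (simp_all add: b_def)
  have v_coord: "v i = (a - b) * X i + b * Z i" if "i \<in> {1..n}" for i
    using Dlattice_coord[of n c i a] assms(1) c that unfolding v X_def Z_def b_def
    by (simp add: algebra_simps)
  have "1 \<le> (\<Sum>i=1..n. X i ^ 2)"
    using Dcoeff_a_sum_squares_ge_1[of k0 n c] k0 unfolding X_def
    by (simp flip: of_int_add of_int_power of_int_sum)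
  moreover have "1 \<le> (\<Sum>i=1..n. X i * Z i)"
    using Dcoeff_inner_ge_1[of n c k0] assms(1) c k0 unfolding X_def Z_def
    by (simp flip: of_int_add of_int_mult of_int_sum)
  moreover have "2 \<le> (\<Sum>i=1..n. Z i ^ 2)"
    using Dcoeff_sum_squares_ge_2[of n c k0] assms(1) c k0 unfolding Z_def
    by (simp flip: of_int_add of_int_power of_int_sum)
  ultimately have "a ^ 2 + b ^ 2 \<le> (\<Sum>i=1..n. ((a - b) * X i + b * Z i) ^ 2)"
    by (rule sum_squares_comb_lower_bound[OF b(1,2)])
  also have "\<dots> = (\<Sum>i=1..n. v i ^ 2)"
    by (intro sum.cong) (simp_all add: v_coord)
  finally show ?thesis
    using b(3) by (simp add: vnorm_def)
qed

lemma Dbasis_1_vnorm: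
  assumes "n \<ge> 3" "1 < a" "a \<le> sqrt 2"
  shows "vnorm n (Dbasis a 1) = sqrt 2"
proof -
  have "(\<Sum>i=1..n. Dbasis a 1 i ^ 2)
      = (\<Sum>i=1..n. (if i = 1 then a ^ 2 else 0) + (if i = 2 then alpha_bar a ^ 2 else 0))"
    by (intro sum.cong) (auto simp: Dbasis_def std_e_def)
  also have "\<dots> = a ^ 2 + alpha_bar a ^ 2"
    using assms(1) by (simp add: sum.distrib)
  also have "\<dots> = 2"
    using alpha_bar_facts[OF assms(2,3)] by simp
  finally show ?thesis by (simp add: vnorm_def)
qed

lemma Dbasis_1_in_Dlattice:
  assumes "n \<ge> 1"
  shows "Dbasis a 1 \<in> Dlattice a n"
proof -
  have "(\<Sum>k=1..n. of_int (if k = 1 then 1 else 0) * Dbasis a k i) = Dbasis a 1 i" for i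
  proof -
    have "(\<Sum>k=1..n. of_int (if k = 1 then 1 else 0) * Dbasis a k i)
        = (\<Sum>k=1..n. if k = 1 then Dbasis a k i else 0)"
      by (intro sum.cong) auto
    then show ?thesis using assms by simp
  qed
  then have "Dbasis a 1 = (\<lambda>i. \<Sum>k=1..n. of_int (if k = 1 then 1 else 0) * Dbasis a k i)"
    by simp
  then show ?thesis unfolding Dlattice_def by (intro CollectI exI)
qed

lemma lambda1_Dlattice:
  assumes "n \<ge> 3" "1 < a" "a \<le> sqrt 2"
  shows "lambda1 n (Dlattice a n) = sqrt 2"
  unfolding lambda1_def
proof (rule cInf_eq_minimum)
  have "Dbasis a 1 \<noteq> (\<lambda>i. 0)"
    using assms(2) by (auto simp: Dbasis_def std_e_def fun_eq_iff)
  moreover have "Dbasis a 1 \<in> Dlattice a n"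
    using assms(1) by (intro Dbasis_1_in_Dlattice) simp
  ultimately show "sqrt 2 \<in> {vnorm n v |v. v \<in> Dlattice a n \<and> v \<noteq> (\<lambda>i. 0)}"
    using Dbasis_1_vnorm[OF assms] by force
next
  fix x
  assume "x \<in> {vnorm n v |v. v \<in> Dlattice a n \<and> v \<noteq> (\<lambda>i. 0)}"
  then show "sqrt 2 \<le> x"
    using Dlattice_vnorm_ge[OF assms] by force
qed

lemma sqrt_2_power: "sqrt 2 ^ n = 2 powr (real n / 2)"
proof -
  have "sqrt 2 ^ n = (2 powr (1 / 2)) ^ n"
    by (simp add: powr_half_sqrt)
  also have "\<dots> = 2 powr (real n / 2)"
    by (simp add: powr_power)
  finally show ?thesis .
qed

theorem mainTheorem16:
  fixes n :: nat and a :: real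
  assumes "n \<ge> 3" and "1 < a" and "a \<le> sqrt 2"
  shows "Dcenter_density a n =
    1 / (2 powr (real n / 2) * a ^ (n - 3) * (a ^ 3 + alpha_bar a ^ 3))"
proof -
  let ?s = "sqrt 2 ^ n" and ?V = "a ^ (n - 3) * (a ^ 3 + alpha_bar a ^ 3)"
  have "(2::real) ^ n = ?s * ?s"
    by (simp flip: power_mult_distrib)
  moreover have "?s > 0"
    by simp
  ultimately have "Dcenter_density a n = 1 / (?s * ?V)"
    using assms by (simp add: Dcenter_density_def lambda1_Dlattice Dvol_eq)
  then show ?thesis
    by (simp add: sqrt_2_power mult.assoc)
qed

end
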